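(* Let $\nu\ge1$ and let $Z_1,\dots,Z_N$ be nonnegative random variables for some integer $N\ge2$. Suppose there exist constants $\Theta_1>0$, $\Theta_2>0$ such that $\mathbb EZ_i^{2p}\le[p^{\nu p}+\Theta_2^{\nu p}]\Theta_1^{2p}$ for all integers $p\ge1$ and all $i\in\{1,\dots,N\}$. Then for all real $p\ge1$, $$\mathbb E\max_{i\in\{1,\dots,N\}}Z_i^{2p}\le\big(p^{\nu p}+[\ln N+\Theta_2]^{\nu p}\big)\big((16e\nu)^\nu\Theta_1^2\big)^p.$$ *)

theory Defs
  imports "HOL-Probability.Probability"
begin

end

theory Submission
  imports Defs
begin

text \<open>Let \<open>k = \<lceil>max p (ln N)\<rceil>\<close>, an integer with \<open>p \<le> k\<close>. Bounding the maximum by the sum,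
  \<open>E max Z\<^sub>i^(2k) \<le> N (k^(\<nu>k) + \<Theta>2^(\<nu>k)) \<Theta>1^(2k)\<close>. Since \<open>p/k \<le> 1\<close>, Jensen's inequality
  for the concave map \<open>t \<mapsto> t^(p/k)\<close> (used through its tangent lines) turns this into a bound on
  \<open>E max Z\<^sub>i^(2p)\<close>. As \<open>k \<ge> ln N\<close>, the factor \<open>N^(p/k)\<close> costs at most \<open>e^p\<close>, and
  \<open>k \<le> max p (ln N) + 1\<close> keeps \<open>(k^(\<nu>k) + \<Theta>2^(\<nu>k))^(p/k)\<close> below
  \<open>2^((\<nu>+1)p) (p^(\<nu>p) + (ln N + \<Theta>2)^(\<nu>p))\<close>.\<close>

lemma powr_le_tangent:
  fixes y B r :: real
  assumes "0 \<le> y" "0 < B" "0 \<le> r" "r \<le> 1"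
  shows "y powr r \<le> B powr r * (1 - r) + B powr r * r / B * y"
proof (cases "y = 0")
  case True
  then show ?thesis using assms by simp
next
  case False
  have "(y / B) powr r \<le> r * (y / B) + (1 - r)"
    using Youngs_inequality_0[of r "1 - r" "y / B" 1] False assms by simp
  then have "B powr r * (y / B) powr r \<le> B powr r * (r * (y / B) + (1 - r))"
    by (rule mult_left_mono) simp
  moreover have "B powr r * (y / B) powr r = y powr r"
    using assms by (simp add: powr_divide)
  ultimately show ?thesis by (simp add: algebra_simps)
qed

lemma nn_integral_powr_le:
  fixes f :: "'a \<Rightarrow> real"
  assumes "prob_space M" "f \<in> borel_measurable M" "\<And>x. x \<in> space M \<Longrightarrow> 0 \<le> f x"
    and "(\<integral>\<^sup>+ x. ennreal (f x) \<partial>M) \<le> ennreal B" "0 < B" "0 \<le> r" "r \<le> 1"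
  shows "(\<integral>\<^sup>+ x. ennreal (f x powr r) \<partial>M) \<le> ennreal (B powr r)"
proof -
  interpret prob_space M by fact
  define a b where "a = B powr r * (1 - r)" and "b = B powr r * r / B"
  have "0 \<le> a" "0 \<le> b" using assms(5-7) unfolding a_def b_def by auto
  have "(\<integral>\<^sup>+ x. ennreal (f x powr r) \<partial>M) \<le> (\<integral>\<^sup>+ x. ennreal a + ennreal b * ennreal (f x) \<partial>M)"
  proof (rule nn_integral_mono)
    fix x assume "x \<in> space M"
    then have "f x powr r \<le> a + b * f x"
      using powr_le_tangent[of "f x" B r] assms(3,5-7) unfolding a_def b_def by auto
    then have "ennreal (f x powr r) \<le> ennreal (a + b * f x)"
      by (rule ennreal_leI)
    also have "\<dots> = ennreal a + ennreal b * ennreal (f x)"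
      using \<open>0 \<le> a\<close> \<open>0 \<le> b\<close> \<open>x \<in> space M\<close> assms(3) by (simp add: ennreal_mult)
    finally show "ennreal (f x powr r) \<le> ennreal a + ennreal b * ennreal (f x)" .
  qed
  also have "\<dots> = ennreal a + ennreal b * (\<integral>\<^sup>+ x. ennreal (f x) \<partial>M)"
    using assms(2) by (simp add: nn_integral_add nn_integral_cmult emeasure_space_1)
  also have "\<dots> \<le> ennreal a + ennreal b * ennreal B"
    using assms(4) by (intro add_left_mono mult_left_mono) auto
  also have "\<dots> = ennreal (a + b * B)"
    using \<open>0 \<le> a\<close> \<open>0 \<le> b\<close> assms(5) by (simp add: ennreal_plus ennreal_mult)
  also have "a + b * B = B powr r"
    using assms(5) unfolding a_def b_def by (simp add: algebra_simps)
  finally show ?thesis .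
qed

lemma nn_integral_Max_power_le_sum:
  fixes Z :: "'i \<Rightarrow> 'a \<Rightarrow> real"
  assumes "finite I" "I \<noteq> {}" "\<And>i. i \<in> I \<Longrightarrow> Z i \<in> borel_measurable M"
    and "\<And>i x. i \<in> I \<Longrightarrow> x \<in> space M \<Longrightarrow> 0 \<le> Z i x"
  shows "(\<integral>\<^sup>+ x. ennreal (Max ((\<lambda>i. Z i x) ` I) ^ n) \<partial>M)
           \<le> (\<Sum>i\<in>I. \<integral>\<^sup>+ x. ennreal (Z i x ^ n) \<partial>M)"
proof -
  have "(\<integral>\<^sup>+ x. ennreal (Max ((\<lambda>i. Z i x) ` I) ^ n) \<partial>M)
          \<le> (\<integral>\<^sup>+ x. (\<Sum>i\<in>I. ennreal (Z i x ^ n)) \<partial>M)"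
  proof (rule nn_integral_mono)
    fix x assume x: "x \<in> space M"
    have "Max ((\<lambda>i. Z i x) ` I) \<in> (\<lambda>i. Z i x) ` I"
      using assms(1,2) by (intro Max_in) auto
    then obtain j where j: "j \<in> I" "Max ((\<lambda>i. Z i x) ` I) = Z j x"
      by auto
    have "ennreal (Z j x ^ n) \<le> (\<Sum>i\<in>I. ennreal (Z i x ^ n))"
      using j(1) assms(1) by (intro member_le_sum[where f = "\<lambda>i. ennreal (Z i x ^ n)"]) auto
    then show "ennreal (Max ((\<lambda>i. Z i x) ` I) ^ n) \<le> (\<Sum>i\<in>I. ennreal (Z i x ^ n))"
      using j(2) by simp
  qed
  also have "\<dots> = (\<Sum>i\<in>I. \<integral>\<^sup>+ x. ennreal (Z i x ^ n) \<partial>M)"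
    using assms(3) by (intro nn_integral_sum) measurable
  finally show ?thesis .
qed

lemma power_powr_divide:
  fixes x a :: real
  assumes "0 \<le> x" "0 < n"
  shows "(x ^ n) powr (a / real n) = x powr a"
  using assms by (cases "x = 0") (simp_all add: powr_realpow[symmetric] powr_powr)

lemma nn_integral_powr_le_moment:
  fixes X :: "'a \<Rightarrow> real"
  assumes "prob_space M" "X \<in> borel_measurable M" "\<And>x. x \<in> space M \<Longrightarrow> 0 \<le> X x"
    and "(\<integral>\<^sup>+ x. ennreal (X x ^ n) \<partial>M) \<le> ennreal B" "0 < B" "0 < n" "0 \<le> a" "a \<le> n"
  shows "(\<integral>\<^sup>+ x. ennreal (X x powr a) \<partial>M) \<le> ennreal (B powr (a / n))"
proof -
  have "(\<integral>\<^sup>+ x. ennreal (X x powr a) \<partial>M) = (\<integral>\<^sup>+ x. ennreal ((X x ^ n) powr (a / n)) \<partial>M)"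
    using assms(3,6) by (intro nn_integral_cong) (simp add: power_powr_divide)
  also have "\<dots> \<le> ennreal (B powr (a / n))"
    using assms by (intro nn_integral_powr_le) auto
  finally show ?thesis .
qed

lemma powr_divide_le_exp:
  fixes x p k :: real
  assumes "0 < x" "ln x \<le> k" "0 < k" "0 \<le> p"
  shows "x powr (p / k) \<le> exp p"
proof -
  have "ln x * p \<le> k * p"
    using assms(2,4) by (rule mult_right_mono)
  then have "ln x * p / k \<le> p"
    using assms(3) by (simp add: divide_le_eq mult.commute)
  then show ?thesis
    using assms(1) by (simp add: powr_def mult.commute)
qed

lemma powr_add_powr_le_max:
  fixes a b e :: real
  assumes "0 \<le> a" "0 \<le> b" "0 \<le> e"
  shows "a powr e + b powr e \<le> 2 * max a b powr e"
proof -
  have "a powr e \<le> max a b powr e" "b powr e \<le> max a b powr e"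
    using assms by (auto intro: powr_mono2)
  then show ?thesis by simp
qed

lemma exp_two_powr_le:
  fixes \<nu> p :: real
  assumes "1 \<le> \<nu>" "0 \<le> p"
  shows "exp p * (2 powr p * 2 powr (\<nu> * p)) \<le> (16 * exp 1 * \<nu>) powr (\<nu> * p)"
proof -
  have "p \<le> \<nu> * p"
    using mult_right_mono[OF assms] by simp
  have "exp p * (2 powr p * 2 powr (\<nu> * p)) \<le> exp 1 powr (\<nu> * p) * (2 powr (\<nu> * p) * 2 powr (\<nu> * p))"
    using assms \<open>p \<le> \<nu> * p\<close> by (intro mult_mono powr_mono) (auto simp: powr_def)
  also have "\<dots> = (4 * exp 1) powr (\<nu> * p)"
    by (simp add: powr_mult[symmetric] mult.commute)
  also have "\<dots> \<le> (16 * exp 1 * \<nu>) powr (\<nu> * p)"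
    using assms by (intro powr_mono2) auto
  finally show ?thesis .
qed

lemma powr_add_powr_divide_le:
  fixes p \<nu> k L \<Theta> :: real
  assumes p: "1 \<le> p" and "0 \<le> \<nu>" "0 \<le> L" "0 < \<Theta>"
    and k: "max p L \<le> k" "k \<le> max p L + 1"
  shows "(k powr (\<nu> * k) + \<Theta> powr (\<nu> * k)) powr (p / k)
           \<le> 2 powr p * (2 powr (\<nu> * p) * (p powr (\<nu> * p) + (L + \<Theta>) powr (\<nu> * p)))"
proof -
  define m where "m = max k \<Theta>"
  have "0 < k" using k p by linarith
  have m_le: "m \<le> 2 * max p (L + \<Theta>)"
  proof -
    have "k \<le> 2 * max p (L + \<Theta>)"
      using k p \<open>0 < \<Theta>\<close> by (cases "L \<le> p") (auto simp: max_def)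
    then show ?thesis using \<open>0 \<le> L\<close> \<open>0 < \<Theta>\<close> unfolding m_def by (auto simp: max_def)
  qed
  have "(k powr (\<nu> * k) + \<Theta> powr (\<nu> * k)) powr (p / k) \<le> (2 * m powr (\<nu> * k)) powr (p / k)"
    using assms \<open>0 < k\<close> unfolding m_def by (intro powr_mono2 powr_add_powr_le_max) auto
  also have "\<dots> = 2 powr (p / k) * m powr (\<nu> * p)"
    using \<open>0 < k\<close> \<open>0 < \<Theta>\<close> unfolding m_def by (simp add: powr_mult powr_powr)
  also have "\<dots> \<le> 2 powr p * (2 * max p (L + \<Theta>)) powr (\<nu> * p)"
    using assms \<open>0 < k\<close> m_le unfolding m_def
    by (intro mult_mono powr_mono powr_mono2) (auto simp: divide_le_eq)
  also have "\<dots> \<le> 2 powr p * (2 powr (\<nu> * p) * (p powr (\<nu> * p) + (L + \<Theta>) powr (\<nu> * p)))"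
    using \<open>0 \<le> L\<close> \<open>0 < \<Theta>\<close> p by (simp add: powr_mult max_def)
  finally show ?thesis .
qed

lemma ceiling_moment_powr_le:
  fixes p \<nu> \<Theta>1 \<Theta>2 :: real and N k :: nat
  assumes p: "1 \<le> p" and \<nu>: "1 \<le> \<nu>" and N: "2 \<le> N" and "0 < \<Theta>1" "0 < \<Theta>2"
    and k: "max p (ln N) \<le> k" "k \<le> max p (ln N) + 1"
  shows "(N * ((k powr (\<nu> * k) + \<Theta>2 powr (\<nu> * k)) * \<Theta>1 ^ (2 * k))) powr (p / k)
           \<le> (p powr (\<nu> * p) + (ln N + \<Theta>2) powr (\<nu> * p)) * ((16 * exp 1 * \<nu>) powr \<nu> * \<Theta>1 ^ 2) powr p"
proof -
  define S where "S = p powr (\<nu> * p) + (ln N + \<Theta>2) powr (\<nu> * p)"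
  have "0 \<le> p" "0 < k" using k p by linarith+
  have "0 \<le> S" unfolding S_def by simp
  have N_factor: "real N powr (p / k) \<le> exp p"
    using N k p \<open>0 < k\<close> by (intro powr_divide_le_exp) auto
  have K_factor: "(k powr (\<nu> * k) + \<Theta>2 powr (\<nu> * k)) powr (p / k) \<le> 2 powr p * (2 powr (\<nu> * p) * S)"
    unfolding S_def using assms by (intro powr_add_powr_divide_le) auto
  have \<Theta>1_factor: "(\<Theta>1 ^ (2 * k)) powr (p / k) = (\<Theta>1 ^ 2) powr p"
    using power_powr_divide[of \<Theta>1 "2 * k" "2 * p"] power_powr_divide[of \<Theta>1 2 "2 * p"]
      \<open>0 < \<Theta>1\<close> \<open>0 < k\<close> by simp
  have "(N * ((k powr (\<nu> * k) + \<Theta>2 powr (\<nu> * k)) * \<Theta>1 ^ (2 * k))) powr (p / k)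
      = real N powr (p / k) * (k powr (\<nu> * k) + \<Theta>2 powr (\<nu> * k)) powr (p / k) * (\<Theta>1 ^ 2) powr p"
    using \<Theta>1_factor by (simp add: powr_mult)
  also have "\<dots> \<le> exp p * (2 powr p * (2 powr (\<nu> * p) * S)) * (\<Theta>1 ^ 2) powr p"
    using N_factor K_factor by (intro mult_right_mono mult_mono) auto
  also have "\<dots> \<le> (16 * exp 1 * \<nu>) powr (\<nu> * p) * S * (\<Theta>1 ^ 2) powr p"
    using mult_right_mono[OF exp_two_powr_le[OF \<nu> \<open>0 \<le> p\<close>] \<open>0 \<le> S\<close>]
    by (intro mult_right_mono) (simp_all add: mult.assoc)
  also have "\<dots> = S * ((16 * exp 1 * \<nu>) powr \<nu> * \<Theta>1 ^ 2) powr p"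
    using \<nu> by (simp add: powr_mult powr_powr)
  finally show ?thesis unfolding S_def .
qed

theorem corollaryB5:
  fixes M :: "'a measure" and Z :: "nat \<Rightarrow> 'a \<Rightarrow> real"
    and N :: nat and \<nu> \<Theta>1 \<Theta>2 :: real
  assumes "prob_space M"
    and "\<nu> \<ge> 1" and "N \<ge> 2"
    and "\<And>i. i \<in> {1..N} \<Longrightarrow> Z i \<in> borel_measurable M"
    and "\<And>i x. i \<in> {1..N} \<Longrightarrow> x \<in> space M \<Longrightarrow> Z i x \<ge> 0"
    and "\<Theta>1 > 0" and "\<Theta>2 > 0"
    and "\<And>(p::nat) i. p \<ge> 1 \<Longrightarrow> i \<in> {1..N} \<Longrightarrow>
           (\<integral>\<^sup>+ x. ennreal (Z i x ^ (2 * p)) \<partial>M)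
             \<le> ennreal ((real p powr (\<nu> * real p) + \<Theta>2 powr (\<nu> * real p)) * \<Theta>1 ^ (2 * p))"
  shows "\<And>p::real. p \<ge> 1 \<Longrightarrow>
           (\<integral>\<^sup>+ x. ennreal (Max ((\<lambda>i. Z i x) ` {1..N}) powr (2 * p)) \<partial>M)
             \<le> ennreal ((p powr (\<nu> * p) + (ln (real N) + \<Theta>2) powr (\<nu> * p))
                 * ((16 * exp 1 * \<nu>) powr \<nu> * \<Theta>1 ^ 2) powr p)"
proof -
  fix p :: real assume p: "p \<ge> 1"
  define k where "k = nat \<lceil>max p (ln (real N))\<rceil>"
  define C where "C = (k powr (\<nu> * k) + \<Theta>2 powr (\<nu> * k)) * \<Theta>1 ^ (2 * k)"
  have k: "max p (ln N) \<le> k" "k \<le> max p (ln N) + 1"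
    unfolding k_def using p by linarith+
  then have "1 \<le> k" using p by linarith
  have "0 < C"
    unfolding C_def using \<open>1 \<le> k\<close> \<open>\<Theta>1 > 0\<close> \<open>\<Theta>2 > 0\<close> by (intro mult_pos_pos add_pos_pos) auto
  have Max_nonneg: "0 \<le> Max ((\<lambda>i. Z i x) ` {1..N})" if "x \<in> space M" for x
    using assms(3,5) that by (intro Max_ge_iff[THEN iffD2]) auto
  have "(\<integral>\<^sup>+ x. ennreal (Max ((\<lambda>i. Z i x) ` {1..N}) ^ (2 * k)) \<partial>M)
          \<le> (\<Sum>i\<in>{1..N}. \<integral>\<^sup>+ x. ennreal (Z i x ^ (2 * k)) \<partial>M)"
    using assms(3-5) by (intro nn_integral_Max_power_le_sum) auto
  also have "\<dots> \<le> (\<Sum>i\<in>{1..N}. ennreal C)"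
    using assms(8)[OF \<open>1 \<le> k\<close>] unfolding C_def by (intro sum_mono) auto
  also have "\<dots> = ennreal (N * C)"
    using \<open>0 < C\<close> by (simp add: ennreal_mult ennreal_of_nat_eq_real_of_nat)
  finally have "(\<integral>\<^sup>+ x. ennreal (Max ((\<lambda>i. Z i x) ` {1..N}) powr (2 * p)) \<partial>M)
                  \<le> ennreal ((N * C) powr (2 * p / real (2 * k)))"
    using assms(1,3,4) Max_nonneg \<open>0 < C\<close> k p
    by (intro nn_integral_powr_le_moment) auto
  also have "\<dots> \<le> ennreal ((p powr (\<nu> * p) + (ln (real N) + \<Theta>2) powr (\<nu> * p))
                 * ((16 * exp 1 * \<nu>) powr \<nu> * \<Theta>1 ^ 2) powr p)"
    using ceiling_moment_powr_le[OF p assms(2,3,6,7) k] unfolding C_def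
    by (intro ennreal_leI) simp
  finally show "(\<integral>\<^sup>+ x. ennreal (Max ((\<lambda>i. Z i x) ` {1..N}) powr (2 * p)) \<partial>M)
             \<le> ennreal ((p powr (\<nu> * p) + (ln (real N) + \<Theta>2) powr (\<nu> * p))
                 * ((16 * exp 1 * \<nu>) powr \<nu> * \<Theta>1 ^ 2) powr p)" .
qed

end
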